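(* Let $p$ be a prime and let $\Gamma$ be a countably infinite subgroup of $\bigoplus_{i \in B_1} \mathbb{Q} \oplus \bigoplus_{i \in B_2} \mathcal{C}(p^\infty)$ (for index sets $B_1, B_2$), regarded as a discrete abelian group. Then $\Gamma$ contains an infinite $p$-PR set if and only if $\Gamma$ contains an infinite independent set.
   Context: $\mathcal{C}(p^\infty)$ denotes the group of all $p^m$-th roots of unity, $m \ge 1$. For a discrete abelian group $\Delta$ with compact dual $\widehat{\Delta}$ and $N \in \mathbb{N}$, a subset $E \subset \Delta$ is $N$-PR if for every function $\varphi: E \to \mathbb{Z}_N$ (the $N$-th roots of unity in the unit circle) there exists $x \in \widehat{\Delta}$ with $\varphi(\gamma) = \gamma(x)$ for all $\gamma \in E$. A set $E$ in an abelian group (written multiplicatively) is independent if whenever $\gamma_1,\dots,\gamma_n \in E$ are distinct, $m_i \in \mathbb{Z}$ and $\prod_i \gamma_i^{m_i} = 1$, then $\gamma_i^{m_i} = 1$ for all $i$. *)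

theory Defs
  imports "HOL-Algebra.Algebra" "HOL-Computational_Algebra.Primes" Complex_Main
begin

definition Cpinf :: "nat \<Rightarrow> complex set" where
  "Cpinf p = {z. \<exists>m\<ge>1. z ^ (p ^ m) = 1}"

text \<open>An element is a pair (f, g) of finitely supported families; the group law is
  componentwise addition on the Q-part and componentwise multiplication of roots of unity.\<close>
definition mixed_sum_group ::
  "nat \<Rightarrow> 'a set \<Rightarrow> 'b set \<Rightarrow> (('a \<Rightarrow> rat) \<times> ('b \<Rightarrow> complex)) monoid" where
  "mixed_sum_group p B1 B2 =
     \<lparr> carrier = {(f, g). (\<forall>i. i \<notin> B1 \<longrightarrow> f i = 0) \<and> finite {i. f i \<noteq> 0}
                      \<and> (\<forall>i\<in>B2. g i \<in> Cpinf p) \<and> (\<forall>i. i \<notin> B2 \<longrightarrow> g i = 1)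
                      \<and> finite {i. g i \<noteq> 1}},
       monoid.mult = (\<lambda>(f, g) (f', g'). (\<lambda>i. f i + f' i, \<lambda>i. g i * g' i)),
       one = (\<lambda>_. 0, \<lambda>_. 1) \<rparr>"

definition character :: "('g, 'm) monoid_scheme \<Rightarrow> ('g \<Rightarrow> complex) \<Rightarrow> bool" where
  "character G \<chi> \<longleftrightarrow>
     (\<forall>x\<in>carrier G. cmod (\<chi> x) = 1) \<and>
     (\<forall>x\<in>carrier G. \<forall>y\<in>carrier G. \<chi> (x \<otimes>\<^bsub>G\<^esub> y) = \<chi> x * \<chi> y)"

definition NPR :: "('g, 'm) monoid_scheme \<Rightarrow> nat \<Rightarrow> 'g set \<Rightarrow> bool" where
  "NPR G N E \<longleftrightarrow> E \<subseteq> carrier G \<and>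
     (\<forall>\<phi> :: 'g \<Rightarrow> complex. (\<forall>\<gamma>\<in>E. \<phi> \<gamma> ^ N = 1) \<longrightarrow>
        (\<exists>\<chi>. character G \<chi> \<and> (\<forall>\<gamma>\<in>E. \<chi> \<gamma> = \<phi> \<gamma>)))"

definition independent_set :: "('g, 'm) monoid_scheme \<Rightarrow> 'g set \<Rightarrow> bool" where
  "independent_set G E \<longleftrightarrow> E \<subseteq> carrier G \<and>
     (\<forall>F (m :: 'g \<Rightarrow> int). finite F \<and> F \<subseteq> E \<and>
        finprod G (\<lambda>\<gamma>. \<gamma> [^]\<^bsub>G\<^esub> m \<gamma>) F = \<one>\<^bsub>G\<^esub> \<longrightarrow>
        (\<forall>\<gamma>\<in>F. \<gamma> [^]\<^bsub>G\<^esub> m \<gamma> = \<one>\<^bsub>G\<^esub>))"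

end

(* Call a set E of elements of Gamma independent mod p if every relation prod_g g^(m g) = 1
   among its elements has all exponents divisible by p.  An infinite p-PR set is independent
   mod p, since a character sending one element to a primitive p-th root of unity and all others
   to 1 kills every relation; so is an infinite independent set once the identity is removed,
   since a non-trivial element of Gamma has infinite order or order a power of p.

   An infinite set independent mod p forces the supports of the rational parts of the elements
   of Gamma, or the supports of the elements of order p, to be unbounded.  Otherwise, with these
   supports inside finite sets S1 and S2, cancel the rational parts of |S1| + 1 elements at a
   time by an integer relation with coprime coefficients.  This gives |S2| + 1 torsion elements
   that are still independent mod p, so the subgroup they generate has at least p^(|S2| + 1)
   elements of order dividing p; but these are all supported on S2, where there are only
   p^|S2| such elements.

   Conversely, if either kind of support is unbounded, pick x_0, x_1, ... in Gamma such that
   each x_n has a support coordinate idx_n used by no earlier x_k.  Prescribing the values of a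
   character on the x_n then amounts to solving a lower triangular system, so {x_n} is both
   p-PR and independent. *)

theory Submission
  imports Defs "HOL-Library.Function_Algebras"
begin

section \<open>Powers in commutative monoids\<close>

lemma power_fun_apply: "(f ^ n) x = f x ^ n"
  by (induction n) auto

lemma prod_fun_apply: "(\<Prod>a\<in>A. f a) x = (\<Prod>a\<in>A. f a x)"
  by (induction A rule: infinite_finite_induct) auto

lemma prod_power: "(\<Prod>a\<in>A. f a) ^ n = (\<Prod>a\<in>A. f a ^ n)"
  for f :: "'b \<Rightarrow> 'a::comm_monoid_mult"
  by (induction n) (simp_all add: prod.distrib)

lemma common_exponent:
  fixes S :: "'a::comm_monoid_mult set"
  assumes "finite S" and "\<And>z. z \<in> S \<Longrightarrow> \<exists>n>0. z ^ n = 1"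
  shows "\<exists>n>0. \<forall>z\<in>S. z ^ n = 1"
  using assms
proof (induction S rule: finite_induct)
  case empty
  show ?case by (intro exI[of _ 1]) simp
next
  case (insert z S)
  obtain n where n: "n > 0" "\<forall>w\<in>S. w ^ n = 1" using insert by blast
  obtain k where k: "k > 0" "z ^ k = 1" using insert by blast
  have "w ^ (n * k) = 1" if "w \<in> insert z S" for w
  proof (cases "w = z")
    case True thus ?thesis using k by (simp add: power_mult mult.commute[of n k])
  next
    case False thus ?thesis using that n by (simp add: power_mult)
  qed
  thus ?case using n k by (intro exI[of _ "n * k"]) auto
qed

lemma power_eq_one_cancel_left:
  fixes x :: "'a::comm_monoid_mult"
  assumes "x ^ Q = 1" "0 < Q" "x * u = x * v"
  shows "u = v"
proof -
  obtain y where inv: "y * x = 1" using power_minus_mult[OF assms(2), of x] assms(1) by metis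
  have "u = y * (x * u)" by (simp add: inv mult.assoc[symmetric])
  also have "\<dots> = v" by (simp add: assms(3) inv mult.assoc[symmetric])
  finally show ?thesis .
qed

lemma card_le_card_power_image_mult_card_power_kernel:
  fixes H :: "'a::comm_monoid_mult set"
  assumes fin: "finite H" and mult: "\<And>x y. x \<in> H \<Longrightarrow> y \<in> H \<Longrightarrow> x * y \<in> H"
    and inv: "\<And>x. x \<in> H \<Longrightarrow> \<exists>y\<in>H. x * y = 1"
  shows "card H \<le> card ((\<lambda>x. x ^ n) ` H) * card {x\<in>H. x ^ n = 1}"
proof -
  have fibre: "card {x\<in>H. x ^ n = q} \<le> card {x\<in>H. x ^ n = 1}" if q: "q \<in> (\<lambda>x. x ^ n) ` H" for q
  proof -
    obtain y where "y \<in> H" "q = y ^ n" using q by blast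
    moreover obtain y' where "y' \<in> H" "y * y' = 1" using inv[OF \<open>y \<in> H\<close>] by blast
    ultimately have y: "y \<in> H" "q = y ^ n" "y' \<in> H" "y * y' = 1" by blast+
    have "inj_on (\<lambda>x. x * y') {x\<in>H. x ^ n = q}"
    proof (rule inj_onI)
      fix x z assume "x * y' = z * y'"
      hence "x * y' * y = z * y' * y" by simp
      thus "x = z" using y(4) by (simp add: mult.assoc mult.commute[of y'])
    qed
    moreover have "(x * y') ^ n = 1" if "x ^ n = q" for x
      using that y(2,4) by (metis power_mult_distrib power_one)
    hence "(\<lambda>x. x * y') ` {x\<in>H. x ^ n = q} \<subseteq> {x\<in>H. x ^ n = 1}"
      using y(3) mult by auto
    ultimately show ?thesis using fin by (intro card_inj_on_le) auto
  qed
  have "card H = card (\<Union>q\<in>(\<lambda>x. x ^ n) ` H. {x\<in>H. x ^ n = q})"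
    by (intro arg_cong[where f = card]) auto
  also have "\<dots> \<le> (\<Sum>q\<in>(\<lambda>x. x ^ n) ` H. card {x\<in>H. x ^ n = q})"
    by (rule card_UN_le) (use fin in simp)
  also have "\<dots> \<le> card ((\<lambda>x. x ^ n) ` H) * card {x\<in>H. x ^ n = 1}"
    using sum_bounded_above[of "(\<lambda>x. x ^ n) ` H" "\<lambda>q. card {x\<in>H. x ^ n = q}"] fibre by simp
  finally show ?thesis .
qed

definition power_span :: "(nat \<Rightarrow> 'a::comm_monoid_mult) \<Rightarrow> nat \<Rightarrow> 'a set" where
  "power_span h N = range (\<lambda>c. \<Prod>b<N. h b ^ c b)"

lemma power_span_mult:
  assumes "x \<in> power_span h N" "y \<in> power_span h N"
  shows "x * y \<in> power_span h N"
proof -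
  obtain c c' where "x = (\<Prod>b<N. h b ^ c b)" "y = (\<Prod>b<N. h b ^ c' b)"
    using assms unfolding power_span_def by blast
  hence "x * y = (\<Prod>b<N. h b ^ (c b + c' b))" by (simp add: power_add prod.distrib)
  thus ?thesis unfolding power_span_def by (rule range_eqI[where x = "\<lambda>b. c b + c' b"])
qed

lemma power_span_power:
  assumes "x \<in> power_span h N"
  shows "x ^ n \<in> power_span h N"
proof -
  obtain c where "x = (\<Prod>b<N. h b ^ c b)" using assms unfolding power_span_def by blast
  hence "x ^ n = (\<Prod>b<N. h b ^ (c b * n))" by (simp add: power_mult prod_power)
  thus ?thesis unfolding power_span_def by (rule range_eqI[where x = "\<lambda>b. c b * n"])
qed

lemma power_span_exponent:
  assumes "\<And>b. b < N \<Longrightarrow> h b ^ Q = 1" "x \<in> power_span h N"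
  shows "x ^ Q = 1"
proof -
  obtain c where "x = (\<Prod>b<N. h b ^ c b)" using assms(2) unfolding power_span_def by blast
  hence "x ^ Q = (\<Prod>b<N. (h b ^ Q) ^ c b)"
    by (simp add: prod_power flip: power_mult) (simp add: mult.commute)
  thus ?thesis using assms(1) by simp
qed

lemma finite_power_span:
  assumes "\<And>b. b < N \<Longrightarrow> h b ^ Q = 1" "0 < Q"
  shows "finite (power_span h N)"
proof -
  have "power_span h N \<subseteq> (\<lambda>c. \<Prod>b<N. h b ^ c b) ` (\<Pi>\<^sub>E b\<in>{..<N}. {..<Q})"
  proof
    fix x assume "x \<in> power_span h N"
    then obtain c where x: "x = (\<Prod>b<N. h b ^ c b)" unfolding power_span_def by blast
    have "h b ^ c b = h b ^ (c b mod Q)" if "b < N" for b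
    proof -
      have "h b ^ c b = (h b ^ Q) ^ (c b div Q) * h b ^ (c b mod Q)"
        by (simp flip: power_mult power_add)
      thus ?thesis using assms(1)[OF that] by simp
    qed
    hence "x = (\<Prod>b<N. h b ^ restrict (\<lambda>b. c b mod Q) {..<N} b)" unfolding x
      by (intro prod.cong) auto
    moreover have "restrict (\<lambda>b. c b mod Q) {..<N} \<in> (\<Pi>\<^sub>E b\<in>{..<N}. {..<Q})" using assms(2) by auto
    ultimately show "x \<in> (\<lambda>c. \<Prod>b<N. h b ^ c b) ` (\<Pi>\<^sub>E b\<in>{..<N}. {..<Q})" by blast
  qed
  thus ?thesis by (rule finite_subset) (intro finite_imageI finite_PiE; simp)
qed

text \<open>Here \<open>n - 1\<close> stands for \<open>-1\<close> modulo \<open>p\<close>, which keeps all exponents natural.\<close>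

lemma residue_eq_of_dvd_combination:
  fixes a a' c c' s n :: nat
  assumes "0 < n" "p dvd n" "p dvd a + c * p + (n - 1) * s" "s = a' + c' * p" "a < p" "a' < p"
  shows "a = a'"
proof -
  obtain k where k: "n = p * k" using assms(2) by blast
  obtain t where t: "a + c * p + (n - 1) * s = p * t" using assms(3) by blast
  have "(n - 1) * s + s = n * s" using assms(1) by (cases n) simp_all
  hence "p * t + s = a + c * p + n * s" using t by linarith
  also have "\<dots> = a + (c + k * s) * p" by (simp add: k algebra_simps)
  finally have "(p * t + s) mod p = (a + (c + k * s) * p) mod p" by simp
  hence "a' mod p = a mod p" using assms(4) by simp
  thus ?thesis using assms(5,6) by simp
qed

lemma power_image_of_power_span:
  assumes "q \<in> (\<lambda>x. x ^ p) ` power_span h N"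
  shows "\<exists>c. q = (\<Prod>b<N. h b ^ (c b * p))"
proof -
  obtain c where "q = (\<Prod>b<N. h b ^ c b) ^ p" using assms unfolding power_span_def by blast
  thus ?thesis unfolding prod_power power_mult by blast
qed

lemma inj_on_power_span_residues_times_powers:
  fixes h :: "nat \<Rightarrow> 'a::comm_monoid_mult"
  assumes "0 < p" "0 < Q" and exp: "\<And>b. b < N \<Longrightarrow> h b ^ Q = 1"
    and rel: "\<And>c. (\<Prod>b<N. h b ^ c b) = 1 \<Longrightarrow> \<forall>b<N. p dvd c b"
  shows "inj_on (\<lambda>(a, q). (\<Prod>b<N. h b ^ a b) * q)
    ((\<Pi>\<^sub>E b\<in>{..<N}. {..<p}) \<times> (\<lambda>x. x ^ p) ` power_span h N)"
proof (rule inj_onI)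
  fix u v
  assume "u \<in> (\<Pi>\<^sub>E b\<in>{..<N}. {..<p}) \<times> (\<lambda>x. x ^ p) ` power_span h N"
    and "v \<in> (\<Pi>\<^sub>E b\<in>{..<N}. {..<p}) \<times> (\<lambda>x. x ^ p) ` power_span h N"
    and "(\<lambda>(a, q). (\<Prod>b<N. h b ^ a b) * q) u = (\<lambda>(a, q). (\<Prod>b<N. h b ^ a b) * q) v"
  then obtain a q a' q' where uv: "u = (a, q)" "v = (a', q')"
    and a: "a \<in> (\<Pi>\<^sub>E b\<in>{..<N}. {..<p})" "a' \<in> (\<Pi>\<^sub>E b\<in>{..<N}. {..<p})"
    and q: "q \<in> (\<lambda>x. x ^ p) ` power_span h N" "q' \<in> (\<lambda>x. x ^ p) ` power_span h N"
    and eq: "(\<Prod>b<N. h b ^ a b) * q = (\<Prod>b<N. h b ^ a' b) * q'" by auto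
  obtain c where c: "q = (\<Prod>b<N. h b ^ (c b * p))" using power_image_of_power_span[OF q(1)] by blast
  obtain c' where c': "q' = (\<Prod>b<N. h b ^ (c' b * p))" using power_image_of_power_span[OF q(2)]
    by blast
  have pQ: "0 < p * Q" using assms(1,2) by simp
  define s where "s b = a' b + c' b * p" for b
  define z where "z = (\<Prod>b<N. h b ^ s b)"
  have "z \<in> power_span h N" unfolding z_def power_span_def by (rule rangeI)
  hence "z ^ (p * Q) = 1"
    using power_span_exponent[OF exp] unfolding mult.commute[of p Q] power_mult by simp
  have "(\<Prod>b<N. h b ^ a b) * q = z"
    using eq unfolding c c' z_def s_def by (simp add: power_add prod.distrib)
  \<comment> \<open>\<open>z ^ (p * Q - 1)\<close> inverts \<open>z\<close>, which turns the equation into a relation\<close>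
  moreover have "(\<Prod>b<N. h b ^ ((p * Q - 1) * s b)) = z ^ (p * Q - 1)"
    unfolding z_def prod_power by (simp add: mult.commute flip: power_mult)
  ultimately have "(\<Prod>b<N. h b ^ (a b + c b * p + (p * Q - 1) * s b)) = z * z ^ (p * Q - 1)"
    unfolding c by (simp add: power_add prod.distrib)
  also have "\<dots> = 1" using \<open>z ^ (p * Q) = 1\<close> pQ by (simp flip: power_Suc)
  finally have dvd: "\<forall>b<N. p dvd a b + c b * p + (p * Q - 1) * s b" by (rule rel)
  have "a b = a' b" if "b < N" for b
  proof (rule residue_eq_of_dvd_combination[OF pQ _ _ s_def])
    show "p dvd a b + c b * p + (p * Q - 1) * s b" using dvd that by blast
    show "a b < p" "a' b < p" using a that by auto
  qed simp
  hence "a = a'" using a by (intro PiE_ext) auto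
  moreover have "q = q'"
  proof (rule power_eq_one_cancel_left[where Q = Q])
    have "(\<Prod>b<N. h b ^ a b) \<in> power_span h N" unfolding power_span_def by (rule rangeI)
    thus "(\<Prod>b<N. h b ^ a b) ^ Q = 1" using power_span_exponent[where h = h and N = N, OF exp]
      by blast
  qed (use eq \<open>a = a'\<close> \<open>0 < Q\<close> in auto)
  ultimately show "u = v" unfolding uv by simp
qed

text \<open>The span \<open>S\<close> has at least \<open>p ^ N\<close> cosets of \<open>S ^ p\<close>, and there are as many elements
  of order dividing \<open>p\<close> as cosets.\<close>

lemma card_power_kernel_of_power_span_ge:
  fixes h :: "nat \<Rightarrow> 'a::comm_monoid_mult"
  assumes "0 < p" "0 < Q" and exp: "\<And>b. b < N \<Longrightarrow> h b ^ Q = 1"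
    and rel: "\<And>c. (\<Prod>b<N. h b ^ c b) = 1 \<Longrightarrow> \<forall>b<N. p dvd c b"
  shows "p ^ N \<le> card {x \<in> power_span h N. x ^ p = 1}"
proof -
  let ?S = "power_span h N"
  let ?P = "(\<lambda>x. x ^ p) ` ?S"
  define A where "A = (\<Pi>\<^sub>E b\<in>{..<N}. {..<p})"
  have fin: "finite ?S" by (rule finite_power_span[OF exp \<open>0 < Q\<close>])
  have "(\<lambda>(a, q). (\<Prod>b<N. h b ^ a b) * q) ` (A \<times> ?P) \<subseteq> ?S"
  proof clarify
    fix a x assume "x \<in> ?S"
    moreover have "(\<Prod>b<N. h b ^ a b) \<in> ?S" unfolding power_span_def by (rule rangeI)
    ultimately show "(\<Prod>b<N. h b ^ a b) * x ^ p \<in> ?S" by (intro power_span_mult power_span_power)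
  qed
  hence "card A * card ?P \<le> card ?S"
    using card_inj_on_le[OF inj_on_power_span_residues_times_powers[OF assms] _ fin]
    by (simp add: A_def card_cartesian_product)
  also have "card ?S \<le> card ?P * card {x \<in> ?S. x ^ p = 1}"
  proof (rule card_le_card_power_image_mult_card_power_kernel[OF fin power_span_mult])
    fix x assume "x \<in> ?S"
    have "x * x ^ (Q - 1) = 1"
      using power_minus_mult[OF \<open>0 < Q\<close>, of x] power_span_exponent[OF exp \<open>x \<in> ?S\<close>]
      by (simp add: mult.commute)
    thus "\<exists>y\<in>?S. x * y = 1" using power_span_power[OF \<open>x \<in> ?S\<close>] by blast
  qed
  finally have "card A * card ?P \<le> card {x \<in> ?S. x ^ p = 1} * card ?P" by (simp add: mult.commute)
  moreover have "card ?P > 0" using fin by (auto simp: card_gt_0_iff power_span_def)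
  moreover have "card A = p ^ N" unfolding A_def by (simp add: card_PiE)
  ultimately show ?thesis by (simp add: mult_le_cancel2)
qed

section \<open>Roots of unity\<close>

lemma root_of_unity_nonzero:
  fixes z :: "'a::comm_semiring_1"
  assumes "z ^ n = 1" "0 < n"
  shows "z \<noteq> 0"
  using assms by (auto simp: power_0_left)

lemma Cpinf_root_of_unity:
  assumes "0 < p" "z \<in> Cpinf p"
  shows "\<exists>n>0. z ^ n = 1"
proof -
  obtain m where "z ^ p ^ m = 1" using assms(2) unfolding Cpinf_def by blast
  thus ?thesis using assms(1) by (intro exI[of _ "p ^ m"]) simp
qed

lemma Cpinf_mult: "z \<in> Cpinf p \<Longrightarrow> w \<in> Cpinf p \<Longrightarrow> z * w \<in> Cpinf p"
proof -
  assume "z \<in> Cpinf p" "w \<in> Cpinf p"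
  then obtain m n where m: "m \<ge> 1" "z ^ p ^ m = 1" and n: "w ^ p ^ n = 1"
    unfolding Cpinf_def by auto
  have "z ^ p ^ (m + n) = 1" using m by (simp add: power_add power_mult)
  moreover have "w ^ p ^ (m + n) = 1" using n unfolding add.commute[of m n]
    by (simp add: power_add power_mult)
  ultimately have "(z * w) ^ p ^ (m + n) = 1" by (simp add: power_mult_distrib)
  thus ?thesis using m unfolding Cpinf_def by (intro CollectI exI[of _ "m + n"]) auto
qed

lemma Cpinf_inverse: "z \<in> Cpinf p \<Longrightarrow> inverse z \<in> Cpinf p"
  unfolding Cpinf_def by (auto simp: power_inverse)

lemma prime_power_root_of_unity_powi_eq_1_imp_dvd:
  fixes z :: complex
  assumes "Factorial_Ring.prime p" "z ^ p ^ k = 1" "z powi m = 1" "z \<noteq> 1"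
  shows "int p dvd m"
proof (rule ccontr)
  assume "\<not> int p dvd m"
  hence "coprime (int p) m" using assms(1) by (simp add: prime_imp_coprime)
  hence "coprime m (int p ^ k)" by (simp add: coprime_commute)
  then obtain u v where uv: "u * m + v * int p ^ k = 1"
    using bezout_int[of m "int p ^ k"] by auto
  have "z \<noteq> 0" using root_of_unity_nonzero[OF assms(2)] assms(1) by (simp add: prime_gt_0_nat)
  have "z powi (int p ^ k) = 1" using assms(2) by (metis of_nat_power power_int_of_nat)
  hence "z powi (u * m + v * int p ^ k) = 1"
    unfolding mult.commute[of u] mult.commute[of v]
    using assms(3) \<open>z \<noteq> 0\<close> by (simp add: power_int_add power_int_mult)
  thus False using uv assms(4) by simp
qed

lemma cis_powi_eq_1_imp_dvd:
  assumes "0 < n" "cis (2 * pi / real n) powi m = 1"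
  shows "int n dvd m"
proof -
  have "cos (of_int m * (2 * pi / real n)) = 1"
    using assms(2) by (simp add: cis_power_int complex_eq_iff)
  then obtain k :: int where "of_int m * (2 * pi / real n) = of_int k * 2 * pi"
    using cos_one_2pi_int by blast
  hence "real_of_int m = real_of_int (k * int n)" using assms(1) by (simp add: field_simps)
  thus ?thesis by (simp only: of_int_eq_iff) simp
qed

lemma prime_root_of_unity_power_surj:
  fixes z w :: complex
  assumes "Factorial_Ring.prime p" "z ^ p = 1" "z \<noteq> 1" "w ^ p = 1"
  shows "\<exists>e. z ^ e = w"
proof -
  have "0 < p" using assms(1) prime_gt_0_nat by blast
  have "inj_on (\<lambda>e. z ^ e) {..<p}"
  proof (rule linorder_inj_onI')
    fix a b assume ab: "a \<in> {..<p}" "b \<in> {..<p}" "a < b"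
    show "z ^ a \<noteq> z ^ b"
    proof
      assume "z ^ a = z ^ b"
      have "z ^ a * z ^ (b - a) = z ^ b" using ab(3) by (simp flip: power_add)
      hence "z ^ a * z ^ (b - a) = z ^ a * 1" using \<open>z ^ a = z ^ b\<close> by simp
      hence "z ^ (b - a) = 1" using root_of_unity_nonzero[OF assms(2) \<open>0 < p\<close>] by simp
      hence "int p dvd int (b - a)"
        by (intro prime_power_root_of_unity_powi_eq_1_imp_dvd[OF assms(1), of z 1])
          (use assms(2,3) in \<open>simp_all add: power_int_of_nat\<close>)
      hence "p dvd b - a" by simp
      thus False using ab by (simp add: nat_dvd_not_less)
    qed
  qed
  moreover have "(z ^ e) ^ p = (z ^ p) ^ e" for e by (simp only: mult.commute flip: power_mult)
  hence "(\<lambda>e. z ^ e) ` {..<p} \<subseteq> {w. w ^ p = 1}" using assms(2) by auto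
  ultimately have "(\<lambda>e. z ^ e) ` {..<p} = {w. w ^ p = 1}"
    using \<open>0 < p\<close>
      by (intro card_subset_eq finite_roots_unity) (simp_all add: card_image card_roots_unity_eq)
  hence "w \<in> (\<lambda>e. z ^ e) ` {..<p}" using assms(4) by simp
  thus ?thesis by blast
qed

lemma card_supported_roots_of_unity:
  fixes S :: "'i set" and p :: nat
  defines "R \<equiv> {f :: 'i \<Rightarrow> complex. (\<forall>i. f i ^ p = 1) \<and> (\<forall>i. i \<notin> S \<longrightarrow> f i = 1)}"
  assumes "finite S" "0 < p"
  shows "finite R" and "card R \<le> p ^ card S"
proof -
  let ?ext = "\<lambda>g i. if i \<in> S then g i else 1"
  let ?T = "\<Pi>\<^sub>E i\<in>S. {z::complex. z ^ p = 1}"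
  have "R \<subseteq> ?ext ` ?T"
  proof
    fix f assume "f \<in> R"
    hence "restrict f S \<in> ?T" "f = ?ext (restrict f S)" unfolding R_def by auto
    thus "f \<in> ?ext ` ?T" by blast
  qed
  moreover have "finite ?T" using assms(2,3) by (intro finite_PiE finite_roots_unity) auto
  moreover have "card ?T = p ^ card S"
    by (simp add: card_PiE[OF assms(2)] card_roots_unity_eq[OF assms(3)])
  ultimately show "finite R" "card R \<le> p ^ card S"
    using card_image_le[of ?T ?ext] card_mono[of "?ext ` ?T" R] by (auto intro: finite_subset)
qed

section \<open>Linear relations and triangular systems\<close>

lemma exists_nontrivial_linear_relation:
  fixes v :: "'j \<Rightarrow> 'i \<Rightarrow> 'a::field"
  assumes "finite S" "finite J" "card S < card J" "\<And>j i. j \<in> J \<Longrightarrow> i \<notin> S \<Longrightarrow> v j i = 0"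
  shows "\<exists>q. (\<exists>j\<in>J. q j \<noteq> 0) \<and> (\<forall>i. (\<Sum>j\<in>J. q j * v j i) = 0)"
  using assms
proof (induction S arbitrary: J v rule: finite_induct)
  case empty
  then obtain j0 where "j0 \<in> J" by fastforce
  thus ?case using empty.prems(3) by (intro exI[of _ "\<lambda>_. 1"]) auto
next
  case (insert s S)
  show ?case
  proof (cases "\<forall>j\<in>J. v j s = 0")
    case True
    have "card S < card J" using insert.prems(2) insert.hyps by simp
    moreover have "v j i = 0" if "j \<in> J" "i \<notin> S" for j i
      using True insert.prems(3) that by (cases "i = s") auto
    ultimately show ?thesis using insert.IH[of J v] insert.prems(1) by blast
  next
    case False
    then obtain j0 where j0: "j0 \<in> J" "v j0 s \<noteq> 0" by blast
    define J' where "J' = J - {j0}"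
    define w where "w j i = v j i - v j s / v j0 s * v j0 i" for j i
    have "card S < card J'"
      using insert.prems(1,2) insert.hyps(1,2) j0(1) unfolding J'_def
        by (simp add: card_Diff_singleton)
    moreover have "w j i = 0" if "j \<in> J'" "i \<notin> S" for j i
      using that j0 insert.prems(3) unfolding J'_def w_def by (cases "i = s") auto
    ultimately obtain q' where q': "\<exists>j\<in>J'. q' j \<noteq> 0" "\<forall>i. (\<Sum>j\<in>J'. q' j * w j i) = 0"
      using insert.IH[of J' w] insert.prems(1) unfolding J'_def by blast
    define c where "c = (\<Sum>j\<in>J'. q' j * v j s) / v j0 s"
    define q where "q j = (if j = j0 then - c else q' j)" for j
    have "(\<Sum>j\<in>J. q j * v j i) = 0" for i
    proof -
      have "(\<Sum>j\<in>J'. q' j * w j i) = (\<Sum>j\<in>J'. q' j * v j i) - c * v j0 i"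
        unfolding w_def c_def
        by (simp add: algebra_simps sum_subtractf sum_distrib_left sum_distrib_right
            sum_divide_distrib)
      moreover have "(\<Sum>j\<in>J. q j * v j i) = - c * v j0 i + (\<Sum>j\<in>J'. q' j * v j i)"
        using insert.prems(1) j0(1) unfolding J'_def q_def by (simp add: sum.remove)
      ultimately show ?thesis using q'(2) by simp
    qed
    moreover have "\<exists>j\<in>J. q j \<noteq> 0" using q'(1) unfolding q_def J'_def by auto
    ultimately show ?thesis by blast
  qed
qed

lemma rat_common_denominator:
  fixes q :: "'j \<Rightarrow> rat"
  assumes "finite J"
  shows "\<exists>D m. 0 < D \<and> (\<forall>j\<in>J. of_int (m j) = of_int D * q j)"
  using assms
proof (induction J rule: finite_induct)
  case empty
  show ?case by (intro exI[of _ 1]) simp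
next
  case (insert j J)
  then obtain D m where D: "0 < D" "\<forall>k\<in>J. of_int (m k) = of_int D * q k" by blast
  obtain a b where ab: "quotient_of (q j) = (a, b)" by (cases "quotient_of (q j)")
  have "0 < b" "q j = of_int a / of_int b"
    using quotient_of_denom_pos[OF ab] quotient_of_div[OF ab] by simp_all
  hence "of_int (D * a) = of_int (D * b) * q j" by simp
  moreover have "of_int (b * m k) = of_int (D * b) * q k" if "k \<in> J" for k
    using D(2) that by simp
  ultimately show ?case using D(1) \<open>0 < b\<close>
    by (intro exI[of _ "D * b"] exI[of _ "\<lambda>k. if k = j then D * a else b * m k"]) auto
qed

lemma exists_coprime_int_linear_relation:
  fixes v :: "'j \<Rightarrow> 'i \<Rightarrow> rat"
  assumes "finite S" "finite J" "card S < card J" "\<And>j i. j \<in> J \<Longrightarrow> i \<notin> S \<Longrightarrow> v j i = 0"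
  shows "\<exists>m :: 'j \<Rightarrow> int. Gcd (m ` J) = 1 \<and> (\<forall>i. (\<Sum>j\<in>J. of_int (m j) * v j i) = 0)"
proof -
  obtain q where q: "\<exists>j\<in>J. q j \<noteq> 0" "\<forall>i. (\<Sum>j\<in>J. q j * v j i) = 0"
    using exists_nontrivial_linear_relation[of S J v, OF assms] by blast
  obtain D m0 where D: "0 < D" "\<forall>j\<in>J. of_int (m0 j) = of_int D * q j"
    using rat_common_denominator[OF assms(2)] by blast
  obtain g where g: "Gcd (m0 ` J) = g" by blast
  define m where "m j = m0 j div g" for j
  obtain j where "j \<in> J" "q j \<noteq> 0" using q(1) by blast
  hence "m0 j \<noteq> 0" using D by auto
  hence "g \<noteq> 0" using g \<open>j \<in> J\<close> Gcd_0_iff[of "m0 ` J"] by blast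
  hence "0 < g" using g by (metis Gcd_int_greater_eq_0 order.not_eq_order_implies_strict)
  have m0: "m0 j = g * m j" if "j \<in> J" for j
    unfolding m_def using that g[symmetric] by (simp add: Gcd_dvd)
  have "g = Gcd (m0 ` J)" using g by simp
  also have "\<dots> = Gcd ((*) g ` m ` J)" using m0 by (simp add: image_image cong: image_cong)
  also have "\<dots> = g * Gcd (m ` J)" using \<open>0 < g\<close> by (simp add: Gcd_mult abs_mult)
  finally have "Gcd (m ` J) = 1" using \<open>0 < g\<close> by simp
  moreover have "(\<Sum>j\<in>J. of_int (m j) * v j i) = 0" for i
  proof -
    have "of_int (D * g) * (\<Sum>j\<in>J. of_int (m j) * v j i)
        = (\<Sum>j\<in>J. of_int (m0 j) * (of_int D * v j i))"
      using m0 by (simp add: sum_distrib_left algebra_simps)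
    also have "\<dots> = of_int D * of_int D * (\<Sum>j\<in>J. q j * v j i)"
      using D(2) by (simp add: sum_distrib_left algebra_simps)
    finally show ?thesis using q(2) D(1) \<open>0 < g\<close> by simp
  qed
  ultimately show ?thesis by blast
qed

lemma lower_triangular_system_solvable:
  fixes a :: "nat \<Rightarrow> nat \<Rightarrow> 'a::field"
  assumes "\<And>n. a n n \<noteq> 0"
  shows "\<exists>c. \<forall>n. (\<Sum>k\<le>n. c k * a n k) = \<theta> n"
proof -
  have "\<exists>c. \<forall>n. (\<Sum>k<n. c k * a n k) + c n * a n n = \<theta> n"
  proof (rule dependent_wellorder_choice[where P = "\<lambda>c n r. (\<Sum>k<n. c k * a n k) + r * a n n = \<theta> n"])
    fix r :: 'a and c c' :: "nat \<Rightarrow> 'a" and n :: nat assume "\<And>k. k < n \<Longrightarrow> c k = c' k"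
    thus "((\<Sum>k<n. c k * a n k) + r * a n n = \<theta> n) = ((\<Sum>k<n. c' k * a n k) + r * a n n = \<theta> n)"
      by simp
  next
    fix n and c :: "nat \<Rightarrow> 'a"
    show "\<exists>r. (\<Sum>k<n. c k * a n k) + r * a n n = \<theta> n"
      using assms[of n] by (intro exI[of _ "(\<theta> n - (\<Sum>k<n. c k * a n k)) / a n n"]) simp
  qed
  thus ?thesis by (simp add: atMost_Suc lessThan_Suc_atMost[symmetric] add.commute)
qed

lemma triangular_root_of_unity_exponents:
  fixes b :: "nat \<Rightarrow> nat \<Rightarrow> complex"
  assumes "Factorial_Ring.prime p" "\<And>n k. b n k ^ p = 1" "\<And>n. b n n \<noteq> 1" "\<And>n. t n ^ p = 1"
  shows "\<exists>e. \<forall>n. (\<Prod>k\<le>n. b n k ^ e k) = t n"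
proof -
  have "\<exists>e. \<forall>n. b n n ^ e n * (\<Prod>k<n. b n k ^ e k) = t n"
  proof (rule dependent_wellorder_choice[where P = "\<lambda>e n r. b n n ^ r * (\<Prod>k<n. b n k ^ e k) = t n"])
    fix r :: nat and e e' :: "nat \<Rightarrow> nat" and n :: nat assume "\<And>k. k < n \<Longrightarrow> e k = e' k"
    thus "(b n n ^ r * (\<Prod>k<n. b n k ^ e k) = t n) = (b n n ^ r * (\<Prod>k<n. b n k ^ e' k) = t n)"
      by simp
  next
    fix n and e :: "nat \<Rightarrow> nat"
    define P where "P = (\<Prod>k<n. b n k ^ e k)"
    have "(b n k ^ e k) ^ p = (b n k ^ p) ^ e k" for k by (simp only: mult.commute flip: power_mult)
    hence "P ^ p = 1" unfolding P_def prod_power by (simp add: assms(2))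
    hence "P \<noteq> 0" using root_of_unity_nonzero[OF \<open>P ^ p = 1\<close>] prime_gt_0_nat[OF assms(1)] by blast
    have "(t n / P) ^ p = 1" using \<open>P ^ p = 1\<close> assms(4) by (simp add: power_divide)
    then obtain r where "b n n ^ r = t n / P"
      using prime_root_of_unity_power_surj[OF assms(1) assms(2)[of n n] assms(3)[of n]] by blast
    thus "\<exists>r. b n n ^ r * P = t n" using \<open>P \<noteq> 0\<close> by (intro exI[of _ r]) simp
  qed
  thus ?thesis by (simp add: atMost_Suc lessThan_Suc_atMost[symmetric] mult.commute)
qed

lemma obtain_triangular_sequence:
  fixes supp :: "'x \<Rightarrow> 'i set"
  assumes unbounded: "\<And>S. finite S \<Longrightarrow> \<exists>x\<in>A. \<not> supp x \<subseteq> S"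
    and finite: "\<And>x. x \<in> A \<Longrightarrow> finite (supp x)"
  obtains x :: "nat \<Rightarrow> 'x" and idx :: "nat \<Rightarrow> 'i"
  where "\<And>n. x n \<in> A" "\<And>n. idx n \<in> supp (x n)" "\<And>n k. k < n \<Longrightarrow> idx n \<notin> supp (x k)"
    and "inj x" "inj idx"
proof -
  have "\<exists>f. \<forall>n::nat. fst (f n) \<in> A \<and> snd (f n) \<in> supp (fst (f n))
              \<and> snd (f n) \<notin> (\<Union>k<n. supp (fst (f k)))"
  proof (rule dependent_wellorder_choice[where
      P = "\<lambda>f n r. fst r \<in> A \<and> snd r \<in> supp (fst r) \<and> snd r \<notin> (\<Union>k<n. supp (fst (f k)))"])
    fix r :: "'x \<times> 'i" and f g :: "nat \<Rightarrow> 'x \<times> 'i" and n :: nat assume "\<And>k. k < n \<Longrightarrow> f k = g k"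
    thus "(fst r \<in> A \<and> snd r \<in> supp (fst r) \<and> snd r \<notin> (\<Union>k<n. supp (fst (f k)))) =
          (fst r \<in> A \<and> snd r \<in> supp (fst r) \<and> snd r \<notin> (\<Union>k<n. supp (fst (g k))))"
      by simp
  next
    fix n and f :: "nat \<Rightarrow> 'x \<times> 'i"
    assume prev: "\<And>k. k < n \<Longrightarrow> fst (f k) \<in> A \<and> snd (f k) \<in> supp (fst (f k))
                              \<and> snd (f k) \<notin> (\<Union>j<k. supp (fst (f j)))"
    have "finite (\<Union>k<n. supp (fst (f k)))"
      using finite prev by (intro finite_UN_I) auto
    then obtain y where "y \<in> A" "\<not> supp y \<subseteq> (\<Union>k<n. supp (fst (f k)))"
      using unbounded by blast
    then obtain i where "y \<in> A" "i \<in> supp y" "i \<notin> (\<Union>k<n. supp (fst (f k)))" by blast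
    thus "\<exists>r. fst r \<in> A \<and> snd r \<in> supp (fst r) \<and> snd r \<notin> (\<Union>k<n. supp (fst (f k)))"
      by (intro exI[of _ "(y, i)"]) simp
  qed
  then obtain f :: "nat \<Rightarrow> 'x \<times> 'i" where f: "\<And>n. fst (f n) \<in> A" "\<And>n. snd (f n) \<in> supp (fst (f n))"
    "\<And>n k. k < n \<Longrightarrow> snd (f n) \<notin> supp (fst (f k))" by blast
  have "inj (fst \<circ> f)"
  proof (rule linorder_injI)
    fix k n :: nat assume "k < n"
    thus "(fst \<circ> f) k \<noteq> (fst \<circ> f) n" using f(2)[of n] f(3)[of k n] by auto
  qed
  moreover have "inj (snd \<circ> f)"
  proof (rule linorder_injI)
    fix k n :: nat assume "k < n"
    thus "(snd \<circ> f) k \<noteq> (snd \<circ> f) n" using f(2)[of k] f(3)[of k n] by auto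
  qed
  ultimately show ?thesis using f by (intro that) auto
qed

section \<open>Characters and independence modulo \<open>N\<close>\<close>

definition independent_mod :: "('g, 'm) monoid_scheme \<Rightarrow> nat \<Rightarrow> 'g set \<Rightarrow> bool" where
  "independent_mod G N E \<longleftrightarrow> E \<subseteq> carrier G \<and>
     (\<forall>F (m :: 'g \<Rightarrow> int). finite F \<and> F \<subseteq> E \<and> finprod G (\<lambda>\<gamma>. \<gamma> [^]\<^bsub>G\<^esub> m \<gamma>) F = \<one>\<^bsub>G\<^esub> \<longrightarrow>
        (\<forall>\<gamma>\<in>F. int N dvd m \<gamma>))"

lemma independent_modD:
  assumes "independent_mod G N E" "finite F" "F \<subseteq> E"
    and "finprod G (\<lambda>\<gamma>. \<gamma> [^]\<^bsub>G\<^esub> m \<gamma>) F = \<one>\<^bsub>G\<^esub>" "\<gamma> \<in> F"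
  shows "int N dvd m \<gamma>"
  using assms unfolding independent_mod_def by blast

lemma character_mult:
  "character G \<chi> \<Longrightarrow> x \<in> carrier G \<Longrightarrow> y \<in> carrier G \<Longrightarrow> \<chi> (x \<otimes>\<^bsub>G\<^esub> y) = \<chi> x * \<chi> y"
  unfolding character_def by blast

lemma character_nonzero: "character G \<chi> \<Longrightarrow> x \<in> carrier G \<Longrightarrow> \<chi> x \<noteq> 0"
  unfolding character_def by (metis norm_zero zero_neq_one)

context group
begin

lemma character_one:
  assumes "character G \<chi>"
  shows "\<chi> \<one> = 1"
proof -
  have "\<chi> \<one> * \<chi> \<one> = \<chi> \<one> * 1" using character_mult[OF assms one_closed one_closed] by simp
  thus ?thesis using character_nonzero[OF assms one_closed] by simp
qed

lemma character_inv:
  assumes "character G \<chi>" "x \<in> carrier G"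
  shows "\<chi> (inv x) = inverse (\<chi> x)"
proof -
  have "\<chi> (inv x) * \<chi> x = \<chi> (inv x \<otimes> x)"
    using character_mult[OF assms(1) inv_closed[OF assms(2)] assms(2)] by simp
  also have "\<dots> = 1" using assms by (simp add: character_one)
  finally have "\<chi> x * \<chi> (inv x) = 1" by (simp add: mult.commute)
  from inverse_unique[OF this] show ?thesis by simp
qed

lemma character_nat_pow:
  assumes "character G \<chi>" "x \<in> carrier G"
  shows "\<chi> (x [^] (n::nat)) = \<chi> x ^ n"
  using assms by (induction n) (simp_all add: character_one character_mult)

lemma character_int_pow:
  assumes "character G \<chi>" "x \<in> carrier G"
  shows "\<chi> (x [^] (m::int)) = \<chi> x powi m"
proof (cases "m < 0")
  case True
  hence "x [^] m = inv (x [^] nat (- m))" by (simp only: int_pow_def2 if_True)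
  hence "\<chi> (x [^] m) = \<chi> (inv (x [^] nat (- m)))" by (rule arg_cong)
  also have "\<dots> = inverse (\<chi> x ^ nat (- m))" using assms
    by (simp add: character_inv character_nat_pow)
  finally show ?thesis using True by (simp add: power_int_def power_inverse)
next
  case False
  hence "x [^] m = x [^] nat m" by (simp only: int_pow_def2 if_False)
  hence "\<chi> (x [^] m) = \<chi> x ^ nat m" by (simp only: character_nat_pow[OF assms])
  thus ?thesis using False by (simp add: power_int_def)
qed

lemma independent_set_imp_independent_mod:
  assumes "independent_set G E"
    and orders: "\<And>\<gamma> (m::int). \<gamma> \<in> E \<Longrightarrow> \<gamma> \<noteq> \<one> \<Longrightarrow> \<gamma> [^] m = \<one> \<Longrightarrow> int N dvd m"
  shows "independent_mod G N (E - {\<one>})"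
  unfolding independent_mod_def
proof (intro conjI allI impI ballI)
  show "E - {\<one>} \<subseteq> carrier G" using assms(1) unfolding independent_set_def by blast
  fix F and m :: "'a \<Rightarrow> int" and \<gamma>
  assume F: "finite F \<and> F \<subseteq> E - {\<one>} \<and> finprod G (\<lambda>\<gamma>. \<gamma> [^] m \<gamma>) F = \<one>" "\<gamma> \<in> F"
  hence "\<gamma> [^] m \<gamma> = \<one>" using assms(1) unfolding independent_set_def by blast
  thus "int N dvd m \<gamma>" using orders F by blast
qed

end

context comm_group
begin

lemma character_finprod:
  assumes "character G \<chi>" "f \<in> A \<rightarrow> carrier G"
  shows "\<chi> (finprod G f A) = (\<Prod>a\<in>A. \<chi> (f a))"
  using assms(2)
proof (induction A rule: infinite_finite_induct)
  case (insert a A)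
  thus ?case using assms(1) by (simp add: Pi_iff character_mult)
qed (simp_all add: character_one[OF assms(1)])

lemma character_finprod_int_pow:
  assumes "character G \<chi>" "F \<subseteq> carrier G"
  shows "\<chi> (finprod G (\<lambda>\<gamma>. \<gamma> [^] m \<gamma>) F) = (\<Prod>\<gamma>\<in>F. \<chi> \<gamma> powi m \<gamma>)"
proof -
  have "\<chi> (finprod G (\<lambda>\<gamma>. \<gamma> [^] m \<gamma>) F) = (\<Prod>\<gamma>\<in>F. \<chi> (\<gamma> [^] m \<gamma>))"
    using assms by (intro character_finprod) auto
  also have "\<dots> = (\<Prod>\<gamma>\<in>F. \<chi> \<gamma> powi m \<gamma>)"
    using assms by (intro prod.cong refl character_int_pow) auto
  finally show ?thesis .
qed

lemma NPR_imp_independent_mod: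
  assumes "0 < N" "NPR G N E"
  shows "independent_mod G N E"
  unfolding independent_mod_def
proof (intro conjI allI impI ballI)
  show E: "E \<subseteq> carrier G" using assms(2) unfolding NPR_def by simp
  fix F and m :: "'a \<Rightarrow> int" and \<gamma>0
  assume F: "finite F \<and> F \<subseteq> E \<and> finprod G (\<lambda>\<gamma>. \<gamma> [^] m \<gamma>) F = \<one>" and "\<gamma>0 \<in> F"
  define \<omega> where "\<omega> = cis (2 * pi / real N)"
  have extend: "\<exists>\<chi>. character G \<chi> \<and> (\<forall>\<gamma>\<in>E. \<chi> \<gamma> = \<phi> \<gamma>)" if "\<forall>\<gamma>\<in>E. \<phi> \<gamma> ^ N = 1" for \<phi>
    using assms(2) that unfolding NPR_def by blast
  have "\<forall>\<gamma>\<in>E. (if \<gamma> = \<gamma>0 then \<omega> else 1) ^ N = 1" unfolding \<omega>_def by (simp add: DeMoivre)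
  then obtain \<chi> where \<chi>: "character G \<chi>" "\<And>\<gamma>. \<gamma> \<in> E \<Longrightarrow> \<chi> \<gamma> = (if \<gamma> = \<gamma>0 then \<omega> else 1)"
    using extend[of "\<lambda>\<gamma>. if \<gamma> = \<gamma>0 then \<omega> else 1"] by auto
  have "1 = \<chi> (finprod G (\<lambda>\<gamma>. \<gamma> [^] m \<gamma>) F)" using F character_one[OF \<chi>(1)] by simp
  also have "\<dots> = (\<Prod>\<gamma>\<in>F. \<chi> \<gamma> powi m \<gamma>)" using F E by (intro character_finprod_int_pow[OF \<chi>(1)]) auto
  also have "\<dots> = (\<Prod>\<gamma>\<in>{\<gamma>0}. \<chi> \<gamma> powi m \<gamma>)"
    using F \<chi>(2) \<open>\<gamma>0 \<in> F\<close> by (intro prod.mono_neutral_right) (auto simp: subset_iff)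
  also have "\<dots> = \<omega> powi m \<gamma>0" using F \<chi>(2) \<open>\<gamma>0 \<in> F\<close> by auto
  finally show "int N dvd m \<gamma>0" unfolding \<omega>_def using cis_powi_eq_1_imp_dvd[OF assms(1)] by simp
qed

lemma independent_mod_indexed:
  assumes "independent_mod G N E" "finite J" "inj_on y J" "y ` J \<subseteq> E"
    and "finprod G (\<lambda>j. y j [^] \<mu> j) J = \<one>" "j \<in> J"
  shows "int N dvd \<mu> j"
proof -
  define m where "m = \<mu> \<circ> the_inv_into J y"
  have m: "m (y j) = \<mu> j" if "j \<in> J" for j
    unfolding m_def using the_inv_into_f_f[OF assms(3) that] by simp
  have "finprod G (\<lambda>\<gamma>. \<gamma> [^] m \<gamma>) (y ` J) = finprod G (\<lambda>j. y j [^] \<mu> j) J"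
    using assms(1,3,4) unfolding independent_mod_def
    by (subst finprod_reindex) (auto intro!: finprod_cong simp: m)
  hence "int N dvd m (y j)"
    using assms by (intro independent_modD[OF assms(1), of "y ` J"]) auto
  thus ?thesis using assms(6) m by simp
qed

lemma independent_set_rangeI:
  assumes "range x \<subseteq> carrier G" "inj x"
    and separating: "\<And>n (m::int). x n [^] m \<noteq> \<one> \<Longrightarrow>
        \<exists>\<chi>. character G \<chi> \<and> \<chi> (x n) powi m \<noteq> 1 \<and> (\<forall>k. k \<noteq> n \<longrightarrow> \<chi> (x k) = 1)"
  shows "independent_set G (range x)"
  unfolding independent_set_def
proof (intro conjI allI impI ballI)
  show "range x \<subseteq> carrier G" by fact
  fix F and m :: "'a \<Rightarrow> int" and \<gamma>0
  assume F: "finite F \<and> F \<subseteq> range x \<and> finprod G (\<lambda>\<gamma>. \<gamma> [^] m \<gamma>) F = \<one>" and "\<gamma>0 \<in> F"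
  then obtain n where n: "\<gamma>0 = x n" by blast
  show "\<gamma>0 [^] m \<gamma>0 = \<one>"
  proof (rule ccontr)
    assume "\<gamma>0 [^] m \<gamma>0 \<noteq> \<one>"
    then obtain \<chi> where \<chi>: "character G \<chi>" "\<chi> \<gamma>0 powi m \<gamma>0 \<noteq> 1" "\<And>k. k \<noteq> n \<Longrightarrow> \<chi> (x k) = 1"
      using separating n by blast
    have "1 = \<chi> (finprod G (\<lambda>\<gamma>. \<gamma> [^] m \<gamma>) F)" using F character_one[OF \<chi>(1)] by simp
    also have "\<dots> = (\<Prod>\<gamma>\<in>F. \<chi> \<gamma> powi m \<gamma>)"
      using F assms(1) by (intro character_finprod_int_pow[OF \<chi>(1)]) auto
    also have "\<dots> = (\<Prod>\<gamma>\<in>{\<gamma>0}. \<chi> \<gamma> powi m \<gamma>)"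
    proof (rule prod.mono_neutral_right)
      show "\<forall>\<gamma>\<in>F - {\<gamma>0}. \<chi> \<gamma> powi m \<gamma> = 1"
      proof
        fix \<gamma> assume \<gamma>: "\<gamma> \<in> F - {\<gamma>0}"
        then obtain k where "\<gamma> = x k" using F by blast
        moreover have "k \<noteq> n" using \<gamma> n \<open>\<gamma> = x k\<close> by auto
        ultimately show "\<chi> \<gamma> powi m \<gamma> = 1" using \<chi>(3) by simp
      qed
    qed (use F \<open>\<gamma>0 \<in> F\<close> in auto)
    also have "\<dots> = \<chi> \<gamma>0 powi m \<gamma>0" by simp
    finally show False using \<chi>(2) by simp
  qed
qed

lemma NPR_and_independent_if_interpolating_circle:
  assumes "0 < N" "range x \<subseteq> carrier G" "inj x"
    and interpolating: "\<And>\<theta>. \<exists>\<chi>. character G \<chi> \<and> (\<forall>n. \<chi> (x n) = cis (2 * pi * \<theta> n))"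
  shows "NPR G N (range x) \<and> independent_set G (range x)"
proof
  show "NPR G N (range x)"
    unfolding NPR_def
  proof (intro conjI allI impI)
    fix \<phi> :: "'a \<Rightarrow> complex" assume "\<forall>\<gamma>\<in>range x. \<phi> \<gamma> ^ N = 1"
    hence "\<phi> (x n) \<in> (\<lambda>k. cis (2 * pi * real k / real N)) ` {..<N}" for n
      using bij_betw_imp_surj_on[OF bij_betw_roots_unity[OF assms(1)]] by auto
    hence "\<forall>n. \<exists>k. \<phi> (x n) = cis (2 * pi * real k / real N)" by blast
    then obtain k where "\<forall>n. \<phi> (x n) = cis (2 * pi * real (k n) / real N)"
      by (rule choice[THEN exE])
    moreover obtain \<chi> where "character G \<chi>" "\<forall>n. \<chi> (x n) = cis (2 * pi * (real (k n) / real N))"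
      using interpolating[of "\<lambda>n. real (k n) / real N"] by blast
    ultimately show "\<exists>\<chi>. character G \<chi> \<and> (\<forall>\<gamma>\<in>range x. \<chi> \<gamma> = \<phi> \<gamma>)" by auto
  qed (use assms(2) in simp)
  show "independent_set G (range x)"
  proof (rule independent_set_rangeI[OF assms(2,3)])
    fix n and m :: int assume "x n [^] m \<noteq> \<one>"
    hence "m \<noteq> 0" by auto
    obtain \<chi> where \<chi>: "character G \<chi>"
      "\<forall>k. \<chi> (x k) = cis (2 * pi * (if k = n then 1 / (2 * real_of_int m) else 0))"
      using interpolating[of "\<lambda>k. if k = n then 1 / (2 * real_of_int m) else 0"] by blast
    have "\<chi> (x n) powi m = cis (of_int m * (2 * pi * (1 / (2 * real_of_int m))))"
      using \<chi>(2) by (simp add: cis_power_int)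
    also have "\<dots> = -1" using \<open>m \<noteq> 0\<close> by simp
    finally show "\<exists>\<chi>. character G \<chi> \<and> \<chi> (x n) powi m \<noteq> 1 \<and> (\<forall>k. k \<noteq> n \<longrightarrow> \<chi> (x k) = 1)"
      using \<chi> by auto
  qed
qed

lemma NPR_and_independent_if_interpolating_roots:
  assumes "0 < N" "range x \<subseteq> carrier G" "inj x" "\<And>n. x n [^] N = \<one>"
    and interpolating: "\<And>t. (\<forall>n. t n ^ N = 1) \<Longrightarrow> \<exists>\<chi>. character G \<chi> \<and> (\<forall>n. \<chi> (x n) = t n)"
  shows "NPR G N (range x) \<and> independent_set G (range x)"
proof
  show "NPR G N (range x)"
    unfolding NPR_def using assms(2) interpolating[of "\<lambda>n. _ (x n)"] by auto
  show "independent_set G (range x)"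
  proof (rule independent_set_rangeI[OF assms(2,3)])
    fix n and m :: int assume ne: "x n [^] m \<noteq> \<one>"
    have "\<not> int N dvd m"
    proof
      assume "int N dvd m"
      then obtain k where "m = int N * k" by blast
      moreover have "x n \<in> carrier G" using assms(2) by blast
      ultimately have "x n [^] m = (x n [^] int N) [^] k" by (simp add: int_pow_pow)
      thus False using ne assms(4) by (simp add: int_pow_int)
    qed
    define \<omega> where "\<omega> = cis (2 * pi / real N)"
    have "\<forall>k. (if k = n then \<omega> else 1) ^ N = 1" unfolding \<omega>_def by (simp add: DeMoivre)
    from interpolating[OF this] obtain \<chi>
      where \<chi>: "character G \<chi>" "\<forall>k. \<chi> (x k) = (if k = n then \<omega> else 1)" by blast
    have "\<chi> (x n) powi m \<noteq> 1"
      using \<chi>(2) \<open>\<not> int N dvd m\<close> cis_powi_eq_1_imp_dvd[OF assms(1)] unfolding \<omega>_def by auto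
    thus "\<exists>\<chi>. character G \<chi> \<and> \<chi> (x n) powi m \<noteq> 1 \<and> (\<forall>k. k \<noteq> n \<longrightarrow> \<chi> (x k) = 1)"
      using \<chi> by auto
  qed
qed

end

section \<open>The ambient group\<close>

lemma mixed_sum_group_carrier_iff:
  "x \<in> carrier (mixed_sum_group p B1 B2) \<longleftrightarrow>
     (\<forall>i. i \<notin> B1 \<longrightarrow> fst x i = 0) \<and> finite {i. fst x i \<noteq> 0} \<and>
     (\<forall>i\<in>B2. snd x i \<in> Cpinf p) \<and> (\<forall>i. i \<notin> B2 \<longrightarrow> snd x i = 1) \<and> finite {i. snd x i \<noteq> 1}"
  by (cases x) (simp add: mixed_sum_group_def)

lemma mixed_sum_group_mult [simp]:
  "x \<otimes>\<^bsub>mixed_sum_group p B1 B2\<^esub> y = (\<lambda>i. fst x i + fst y i, \<lambda>i. snd x i * snd y i)"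
  by (cases x; cases y) (simp add: mixed_sum_group_def)

lemma mixed_sum_group_one [simp]: "\<one>\<^bsub>mixed_sum_group p B1 B2\<^esub> = (\<lambda>_. 0, \<lambda>_. 1)"
  by (simp add: mixed_sum_group_def)

lemma mixed_sum_group_nat_pow:
  "x [^]\<^bsub>mixed_sum_group p B1 B2\<^esub> (n::nat) = (\<lambda>i. of_nat n * fst x i, \<lambda>i. snd x i ^ n)"
  by (induction n) (auto simp: algebra_simps)

context
  fixes p :: nat and B1 :: "'a set" and B2 :: "'b set"
  assumes "0 < p"
begin

lemma snd_mixed_sum_group_root_of_unity:
  assumes "x \<in> carrier (mixed_sum_group p B1 B2)"
  shows "\<exists>n>0. snd x i ^ n = 1"
  using assms Cpinf_root_of_unity[OF \<open>0 < p\<close>] unfolding mixed_sum_group_carrier_iff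
  by (metis one_power2 zero_less_numeral)

lemma snd_mixed_sum_group_nonzero:
  "x \<in> carrier (mixed_sum_group p B1 B2) \<Longrightarrow> snd x i \<noteq> 0"
  using snd_mixed_sum_group_root_of_unity root_of_unity_nonzero by blast

lemma norm_snd_mixed_sum_group:
  "x \<in> carrier (mixed_sum_group p B1 B2) \<Longrightarrow> norm (snd x i) = 1"
  using snd_mixed_sum_group_root_of_unity power_eq_1_iff by fastforce

lemma snd_mixed_sum_group_power_eq_1:
  assumes "x \<in> carrier (mixed_sum_group p B1 B2)"
  shows "\<exists>n>0. snd x ^ n = 1"
proof -
  have "\<exists>n>0. \<forall>z\<in>snd x ` {i. snd x i \<noteq> 1}. z ^ n = 1"
    using assms snd_mixed_sum_group_root_of_unity
    by (intro common_exponent) (auto simp: mixed_sum_group_carrier_iff)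
  then obtain n where n: "n > 0" "\<And>i. snd x i \<noteq> 1 \<Longrightarrow> snd x i ^ n = 1" by blast
  hence "snd x i ^ n = 1" for i by (cases "snd x i = 1") auto
  hence "snd x ^ n = 1" by (simp add: power_fun_apply fun_eq_iff)
  thus ?thesis using \<open>n > 0\<close> by blast
qed

lemma group_mixed_sum_group: "group (mixed_sum_group p B1 B2)"
proof (rule groupI)
  let ?G = "mixed_sum_group p B1 B2"
  fix x y assume x: "x \<in> carrier ?G" and y: "y \<in> carrier ?G"
  have "{i. fst x i + fst y i \<noteq> 0} \<subseteq> {i. fst x i \<noteq> 0} \<union> {i. fst y i \<noteq> 0}"
    and "{i. snd x i * snd y i \<noteq> 1} \<subseteq> {i. snd x i \<noteq> 1} \<union> {i. snd y i \<noteq> 1}" by auto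
  thus "x \<otimes>\<^bsub>?G\<^esub> y \<in> carrier ?G" using x y unfolding mixed_sum_group_carrier_iff
    by (auto intro: Cpinf_mult finite_subset)
next
  let ?G = "mixed_sum_group p B1 B2"
  fix x assume x: "x \<in> carrier ?G"
  have "(\<lambda>i. - fst x i, \<lambda>i. inverse (snd x i)) \<in> carrier ?G"
    using x unfolding mixed_sum_group_carrier_iff by (auto intro: Cpinf_inverse)
  moreover have "(\<lambda>i. - fst x i, \<lambda>i. inverse (snd x i)) \<otimes>\<^bsub>?G\<^esub> x = \<one>\<^bsub>?G\<^esub>"
    using snd_mixed_sum_group_nonzero[OF x] by simp
  ultimately show "\<exists>y\<in>carrier ?G. y \<otimes>\<^bsub>?G\<^esub> x = \<one>\<^bsub>?G\<^esub>" by blast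
qed (auto simp: mixed_sum_group_carrier_iff Cpinf_def add.assoc mult.assoc)

lemma inv_mixed_sum_group:
  assumes "x \<in> carrier (mixed_sum_group p B1 B2)"
  shows "inv\<^bsub>mixed_sum_group p B1 B2\<^esub> x = (\<lambda>i. - fst x i, \<lambda>i. inverse (snd x i))"
proof (rule group.inv_equality[OF group_mixed_sum_group])
  show "(\<lambda>i. - fst x i, \<lambda>i. inverse (snd x i)) \<in> carrier (mixed_sum_group p B1 B2)"
    using assms unfolding mixed_sum_group_carrier_iff by (auto intro: Cpinf_inverse)
  show "(\<lambda>i. - fst x i, \<lambda>i. inverse (snd x i)) \<otimes>\<^bsub>mixed_sum_group p B1 B2\<^esub> x
      = \<one>\<^bsub>mixed_sum_group p B1 B2\<^esub>"
    using snd_mixed_sum_group_nonzero[OF assms] by simp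
qed (rule assms)

lemma mixed_sum_group_int_pow:
  assumes "x \<in> carrier (mixed_sum_group p B1 B2)"
  shows "x [^]\<^bsub>mixed_sum_group p B1 B2\<^esub> (m::int) = (\<lambda>i. of_int m * fst x i, \<lambda>i. snd x i powi m)"
proof (cases "m < 0")
  case True
  let ?G = "mixed_sum_group p B1 B2"
  have "x [^]\<^bsub>?G\<^esub> nat (- m) \<in> carrier ?G"
    using monoid.nat_pow_closed[OF group.is_monoid[OF group_mixed_sum_group] assms] by simp
  moreover have "x [^]\<^bsub>?G\<^esub> m = inv\<^bsub>?G\<^esub> (x [^]\<^bsub>?G\<^esub> nat (- m))"
    using True by (simp only: int_pow_def2 if_True)
  ultimately show ?thesis using True
    by (simp add: inv_mixed_sum_group mixed_sum_group_nat_pow power_int_def power_inverse)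
next
  case False
  hence "x [^]\<^bsub>mixed_sum_group p B1 B2\<^esub> m = x [^]\<^bsub>mixed_sum_group p B1 B2\<^esub> nat m"
    by (simp only: int_pow_def2 if_False)
  thus ?thesis using False by (simp add: mixed_sum_group_nat_pow power_int_def)
qed

end

section \<open>Subgroups of the ambient group\<close>

locale mixed_sum_subgroup =
  fixes p :: nat and B1 :: "'a set" and B2 :: "'b set"
    and \<Gamma> :: "(('a \<Rightarrow> rat) \<times> ('b \<Rightarrow> complex)) set"
  assumes prime: "Factorial_Ring.prime p"
    and subgroup: "subgroup \<Gamma> (mixed_sum_group p B1 B2)"
begin

abbreviation "G \<equiv> mixed_sum_group p B1 B2"
abbreviation "H \<equiv> G\<lparr>carrier := \<Gamma>\<rparr>"

lemma p_pos: "0 < p"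
  using prime prime_gt_0_nat by blast

lemma group_G: "group G"
  by (rule group_mixed_sum_group[OF p_pos])

lemma in_carrier: "x \<in> \<Gamma> \<Longrightarrow> x \<in> carrier G"
  using subgroup.subset[OF subgroup] by blast

lemma comm_group_H: "comm_group H"
proof -
  interpret group H by (rule subgroup.subgroup_is_group[OF subgroup group_G])
  show ?thesis by (rule group_comm_groupI) (auto simp: add.commute mult.commute)
qed

lemma H_nat_pow: "x [^]\<^bsub>H\<^esub> (n::nat) = (\<lambda>i. of_nat n * fst x i, \<lambda>i. snd x i ^ n)"
  unfolding monoid.nat_pow_consistent[OF group.is_monoid[OF group_G], symmetric]
  by (rule mixed_sum_group_nat_pow)

lemma H_int_pow:
  assumes "x \<in> \<Gamma>"
  shows "x [^]\<^bsub>H\<^esub> (m::int) = (\<lambda>i. of_int m * fst x i, \<lambda>i. snd x i powi m)"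
  using group.int_pow_consistent[OF group_G subgroup assms, of m]
    mixed_sum_group_int_pow[OF p_pos in_carrier[OF assms]] by simp

lemma H_int_pow_closed: "x \<in> \<Gamma> \<Longrightarrow> x [^]\<^bsub>H\<^esub> (m::int) \<in> \<Gamma>"
  using group.int_pow_closed[OF subgroup.subgroup_is_group[OF subgroup group_G], of x m] by simp

lemma finprod_H_int_pow:
  assumes "finite J" "y ` J \<subseteq> \<Gamma>"
  shows "finprod H (\<lambda>j. y j [^]\<^bsub>H\<^esub> \<mu> j) J =
    (\<lambda>i. \<Sum>j\<in>J. of_int (\<mu> j) * fst (y j) i, \<lambda>i. \<Prod>j\<in>J. snd (y j) i powi \<mu> j)"
  using assms
proof (induction J rule: finite_induct)
  case empty
  interpret comm_group H by (rule comm_group_H)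
  show ?case by simp
next
  case (insert j J)
  interpret comm_group H by (rule comm_group_H)
  have "finprod H (\<lambda>j. y j [^]\<^bsub>H\<^esub> \<mu> j) (insert j J)
      = y j [^]\<^bsub>H\<^esub> \<mu> j \<otimes>\<^bsub>H\<^esub> finprod H (\<lambda>j. y j [^]\<^bsub>H\<^esub> \<mu> j) J"
    using insert by (intro finprod_insert) (auto intro: H_int_pow_closed)
  thus ?case using insert by (simp add: H_int_pow)
qed

lemma pow_eq_one_imp_dvd:
  assumes "x \<in> \<Gamma>" "x \<noteq> \<one>\<^bsub>H\<^esub>" "x [^]\<^bsub>H\<^esub> (m::int) = \<one>\<^bsub>H\<^esub>"
  shows "int p dvd m"
proof -
  have fst_m: "of_int m * fst x i = 0" for i
    using assms(3) unfolding H_int_pow[OF assms(1)] by (auto simp: fun_eq_iff)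
  have snd_m: "snd x j powi m = 1" for j
    using assms(3) unfolding H_int_pow[OF assms(1)] by (simp add: fun_eq_iff)
  show ?thesis
  proof (cases "fst x = (\<lambda>_. 0)")
    case True
    then obtain i where "snd x i \<noteq> 1" using assms(2) by (cases x) auto
    moreover have "snd x i \<in> Cpinf p"
      using in_carrier[OF assms(1)] \<open>snd x i \<noteq> 1\<close> unfolding mixed_sum_group_carrier_iff by blast
    then obtain k where "snd x i ^ p ^ k = 1" unfolding Cpinf_def by blast
    ultimately show ?thesis using prime_power_root_of_unity_powi_eq_1_imp_dvd[OF prime] snd_m
      by blast
  next
    case False
    then obtain i where "fst x i \<noteq> 0" by auto
    thus ?thesis using fst_m[of i] by simp
  qed
qed

lemma finite_rational_support: "x \<in> \<Gamma> \<Longrightarrow> finite {i. fst x i \<noteq> 0}"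
  using in_carrier unfolding mixed_sum_group_carrier_iff by blast

lemma finite_torsion_support: "x \<in> \<Gamma> \<Longrightarrow> finite {i. snd x i \<noteq> 1}"
  using in_carrier unfolding mixed_sum_group_carrier_iff by blast

lemma character_rational_part:
  fixes c :: "nat \<Rightarrow> real" and idx :: "nat \<Rightarrow> 'a"
  assumes "inj idx"
  defines "L y \<equiv> \<Sum>k | fst y (idx k) \<noteq> 0. c k * real_of_rat (fst y (idx k))"
  shows "character H (\<lambda>y. cis (2 * pi * L y))"
proof -
  have L: "L y = (\<Sum>k\<in>K. c k * real_of_rat (fst y (idx k)))"
    if "finite K" "{k. fst y (idx k) \<noteq> 0} \<subseteq> K" for y K
    unfolding L_def using that by (intro sum.mono_neutral_left) auto
  have fin: "finite {k. fst y (idx k) \<noteq> 0}" if "y \<in> \<Gamma>" for y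
    using finite_vimageI[OF finite_rational_support[OF that] assms(1)] by (simp add: vimage_def)
  show ?thesis
    unfolding character_def
  proof (intro conjI ballI)
    fix y z assume "y \<in> carrier H" "z \<in> carrier H"
    hence yz: "y \<in> \<Gamma>" "z \<in> \<Gamma>" by simp_all
    define K where "K = {k. fst y (idx k) \<noteq> 0} \<union> {k. fst z (idx k) \<noteq> 0}"
    have "finite K" unfolding K_def using fin yz by blast
    have "L (y \<otimes>\<^bsub>H\<^esub> z) = (\<Sum>k\<in>K. c k * real_of_rat (fst (y \<otimes>\<^bsub>H\<^esub> z) (idx k)))"
      by (rule L[OF \<open>finite K\<close>]) (auto simp: K_def)
    also have "\<dots> = (\<Sum>k\<in>K. c k * real_of_rat (fst y (idx k) + fst z (idx k)))" by simp
    also have "\<dots> = L y + L z"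
      using \<open>finite K\<close> by (simp add: L[of K y] L[of K z] K_def of_rat_add distrib_left sum.distrib)
    finally show "cis (2 * pi * L (y \<otimes>\<^bsub>H\<^esub> z)) = cis (2 * pi * L y) * cis (2 * pi * L z)"
      by (simp add: cis_mult distrib_left)
  qed simp
qed

lemma character_torsion_part:
  fixes e :: "nat \<Rightarrow> nat" and idx :: "nat \<Rightarrow> 'b"
  assumes "inj idx"
  defines "P y \<equiv> \<Prod>k | snd y (idx k) \<noteq> 1. snd y (idx k) ^ e k"
  shows "character H P"
proof -
  have P: "P y = (\<Prod>k\<in>K. snd y (idx k) ^ e k)"
    if "finite K" "{k. snd y (idx k) \<noteq> 1} \<subseteq> K" for y K
    unfolding P_def using that by (intro prod.mono_neutral_left) auto
  have fin: "finite {k. snd y (idx k) \<noteq> 1}" if "y \<in> \<Gamma>" for y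
    using finite_vimageI[OF finite_torsion_support[OF that] assms(1)] by (simp add: vimage_def)
  show ?thesis
    unfolding character_def
  proof (intro conjI ballI)
    fix y assume "y \<in> carrier H"
    thus "cmod (P y) = 1"
      unfolding P_def using norm_snd_mixed_sum_group[OF p_pos in_carrier]
      by (simp add: prod_norm[symmetric] norm_power)
  next
    fix y z assume "y \<in> carrier H" "z \<in> carrier H"
    hence yz: "y \<in> \<Gamma>" "z \<in> \<Gamma>" by simp_all
    define K where "K = {k. snd y (idx k) \<noteq> 1} \<union> {k. snd z (idx k) \<noteq> 1}"
    have "finite K" unfolding K_def using fin yz by blast
    have "P (y \<otimes>\<^bsub>H\<^esub> z) = (\<Prod>k\<in>K. snd (y \<otimes>\<^bsub>H\<^esub> z) (idx k) ^ e k)"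
      by (rule P[OF \<open>finite K\<close>]) (auto simp: K_def)
    also have "\<dots> = (\<Prod>k\<in>K. (snd y (idx k) * snd z (idx k)) ^ e k)" by simp
    also have "\<dots> = P y * P z"
      using \<open>finite K\<close> by (simp add: P[of K y] P[of K z] K_def power_mult_distrib prod.distrib)
    finally show "P (y \<otimes>\<^bsub>H\<^esub> z) = P y * P z" .
  qed
qed

definition p_torsion :: "(('a \<Rightarrow> rat) \<times> ('b \<Rightarrow> complex)) set" where
  "p_torsion = {x \<in> \<Gamma>. x [^]\<^bsub>H\<^esub> p = \<one>\<^bsub>H\<^esub>}"

lemma p_torsion_iff: "x \<in> p_torsion \<longleftrightarrow> x \<in> \<Gamma> \<and> fst x = (\<lambda>_. 0) \<and> (\<forall>i. snd x i ^ p = 1)"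
  using p_pos by (auto simp: p_torsion_def H_nat_pow fun_eq_iff)

definition rational_supports_unbounded :: bool where
  "rational_supports_unbounded \<longleftrightarrow> (\<forall>S. finite S \<longrightarrow> (\<exists>x\<in>\<Gamma>. \<not> {i. fst x i \<noteq> 0} \<subseteq> S))"

definition torsion_supports_unbounded :: bool where
  "torsion_supports_unbounded \<longleftrightarrow> (\<forall>S. finite S \<longrightarrow> (\<exists>x\<in>p_torsion. \<not> {i. snd x i \<noteq> 1} \<subseteq> S))"

lemma NPR_independent_if_rational_supports_unbounded:
  assumes rational_supports_unbounded
  shows "\<exists>E\<subseteq>\<Gamma>. infinite E \<and> NPR H p E \<and> independent_set H E"
proof -
  have unbounded: "\<And>S. finite S \<Longrightarrow> \<exists>x\<in>\<Gamma>. \<not> {i. fst x i \<noteq> 0} \<subseteq> S"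
    using assms unfolding rational_supports_unbounded_def by blast
  obtain x :: "nat \<Rightarrow> ('a \<Rightarrow> rat) \<times> ('b \<Rightarrow> complex)" and idx :: "nat \<Rightarrow> 'a"
    where "\<And>n. x n \<in> \<Gamma>" "\<And>n. idx n \<in> {i. fst (x n) i \<noteq> 0}"
    "\<And>n k. k < n \<Longrightarrow> idx n \<notin> {i. fst (x k) i \<noteq> 0}" "inj x" "inj idx"
    using obtain_triangular_sequence[of \<Gamma> "\<lambda>x. {i. fst x i \<noteq> 0}",
        OF unbounded finite_rational_support]
    by blast
  hence x: "\<And>n. x n \<in> \<Gamma>" "\<And>n. fst (x n) (idx n) \<noteq> 0"
    "\<And>n k. k < n \<Longrightarrow> fst (x k) (idx n) = 0" "inj x" "inj idx" by auto
  define a where "a n k = real_of_rat (fst (x n) (idx k))" for n k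
  have "\<exists>\<chi>. character H \<chi> \<and> (\<forall>n. \<chi> (x n) = cis (2 * pi * \<theta> n))" for \<theta>
  proof -
    have "\<And>n. a n n \<noteq> 0" unfolding a_def using x(2) by simp
    then obtain c where c: "\<And>n. (\<Sum>k\<le>n. c k * a n k) = \<theta> n"
      using lower_triangular_system_solvable[of a \<theta>] by blast
    define \<chi> where "\<chi> = (\<lambda>y :: ('a \<Rightarrow> rat) \<times> ('b \<Rightarrow> complex).
      cis (2 * pi * (\<Sum>k | fst y (idx k) \<noteq> 0. c k * real_of_rat (fst y (idx k)))))"
    have "\<chi> (x n) = cis (2 * pi * \<theta> n)" for n
    proof -
      have "{k. fst (x n) (idx k) \<noteq> 0} \<subseteq> {..n}" using x(3) by (auto simp: not_le[symmetric])
      hence "(\<Sum>k | fst (x n) (idx k) \<noteq> 0. c k * real_of_rat (fst (x n) (idx k)))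
          = (\<Sum>k\<le>n. c k * a n k)"
        unfolding a_def by (intro sum.mono_neutral_left) auto
      thus ?thesis unfolding \<chi>_def c by simp
    qed
    moreover have "character H \<chi>" unfolding \<chi>_def by (rule character_rational_part[OF x(5)])
    ultimately show ?thesis by blast
  qed
  moreover have "range x \<subseteq> carrier H" using x(1) by auto
  ultimately have "NPR H p (range x) \<and> independent_set H (range x)"
    by (intro comm_group.NPR_and_independent_if_interpolating_circle[OF comm_group_H p_pos _ x(4)])
  thus ?thesis using x(1,4) range_inj_infinite by blast
qed

lemma NPR_independent_if_torsion_supports_unbounded:
  assumes torsion_supports_unbounded
  shows "\<exists>E\<subseteq>\<Gamma>. infinite E \<and> NPR H p E \<and> independent_set H E"
proof -
  have unbounded: "\<And>S. finite S \<Longrightarrow> \<exists>x\<in>p_torsion. \<not> {i. snd x i \<noteq> 1} \<subseteq> S"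
    using assms unfolding torsion_supports_unbounded_def by blast
  have finite: "\<And>x. x \<in> p_torsion \<Longrightarrow> finite {i. snd x i \<noteq> 1}"
    using finite_torsion_support p_torsion_iff by blast
  obtain x :: "nat \<Rightarrow> ('a \<Rightarrow> rat) \<times> ('b \<Rightarrow> complex)" and idx :: "nat \<Rightarrow> 'b"
    where "\<And>n. x n \<in> p_torsion" "\<And>n. idx n \<in> {i. snd (x n) i \<noteq> 1}"
    "\<And>n k. k < n \<Longrightarrow> idx n \<notin> {i. snd (x k) i \<noteq> 1}" "inj x" "inj idx"
    using obtain_triangular_sequence[of p_torsion "\<lambda>x. {i. snd x i \<noteq> 1}", OF unbounded finite]
      by blast
  hence x: "\<And>n. x n \<in> p_torsion" "\<And>n. snd (x n) (idx n) \<noteq> 1"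
    "\<And>n k. k < n \<Longrightarrow> snd (x k) (idx n) = 1" "inj x" "inj idx" by auto
  define b where "b n k = snd (x n) (idx k)" for n k
  have "\<exists>\<chi>. character H \<chi> \<and> (\<forall>n. \<chi> (x n) = t n)" if t: "\<forall>n. t n ^ p = 1" for t
  proof -
    have "\<And>n k. b n k ^ p = 1" "\<And>n. b n n \<noteq> 1"
      unfolding b_def using x(1,2) p_torsion_iff by auto
    then obtain e where e: "\<And>n. (\<Prod>k\<le>n. b n k ^ e k) = t n"
      using triangular_root_of_unity_exponents[OF prime] t by blast
    define \<chi> where "\<chi> = (\<lambda>y :: ('a \<Rightarrow> rat) \<times> ('b \<Rightarrow> complex).
      \<Prod>k | snd y (idx k) \<noteq> 1. snd y (idx k) ^ e k)"
    have "\<chi> (x n) = t n" for n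
    proof -
      have "{k. snd (x n) (idx k) \<noteq> 1} \<subseteq> {..n}" using x(3) by (auto simp: not_le[symmetric])
      hence "\<chi> (x n) = (\<Prod>k\<le>n. b n k ^ e k)"
        unfolding \<chi>_def b_def by (intro prod.mono_neutral_left) auto
      thus ?thesis using e by simp
    qed
    moreover have "character H \<chi>" unfolding \<chi>_def by (rule character_torsion_part[OF x(5)])
    ultimately show ?thesis by blast
  qed
  moreover have "range x \<subseteq> carrier H" "\<And>n. x n [^]\<^bsub>H\<^esub> p = \<one>\<^bsub>H\<^esub>"
    using x(1) unfolding p_torsion_def by auto
  ultimately have "NPR H p (range x) \<and> independent_set H (range x)"
    by (intro comm_group.NPR_and_independent_if_interpolating_roots[OF comm_group_H p_pos _ x(4)])
  thus ?thesis using \<open>range x \<subseteq> carrier H\<close> x(4) range_inj_infinite by auto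
qed

lemma NPR_independent_if_supports_unbounded:
  assumes "rational_supports_unbounded \<or> torsion_supports_unbounded"
  shows "\<exists>E\<subseteq>\<Gamma>. infinite E \<and> NPR H p E \<and> independent_set H E"
  using assms NPR_independent_if_rational_supports_unbounded
    NPR_independent_if_torsion_supports_unbounded
  by blast

lemma power_span_in_zero_rational_part:
  assumes "\<And>b. b < N \<Longrightarrow> (\<lambda>_. 0, h b) \<in> \<Gamma>" "f \<in> power_span h N"
  shows "(\<lambda>_. 0, f) \<in> \<Gamma>"
proof -
  interpret group H by (rule subgroup.subgroup_is_group[OF subgroup group_G])
  have pow: "(\<lambda>_. 0, g ^ n) \<in> \<Gamma>" if "(\<lambda>_. 0, g) \<in> \<Gamma>" for g n
  proof -
    have "(\<lambda>_. 0, g) [^]\<^bsub>H\<^esub> n = (\<lambda>_. 0, g ^ n)" by (simp add: H_nat_pow fun_eq_iff power_fun_apply)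
    thus ?thesis using nat_pow_closed[of "(\<lambda>_. 0, g)" n] that by simp
  qed
  have mult: "(\<lambda>_. 0, g * g') \<in> \<Gamma>" if "(\<lambda>_. 0, g) \<in> \<Gamma>" "(\<lambda>_. 0, g') \<in> \<Gamma>" for g g'
  proof -
    have "(\<lambda>_. 0, g) \<otimes>\<^bsub>H\<^esub> (\<lambda>_. 0, g') = (\<lambda>_. 0, g * g')" by (simp add: fun_eq_iff)
    thus ?thesis using m_closed[of "(\<lambda>_. 0, g)" "(\<lambda>_. 0, g')"] that by simp
  qed
  have "(\<lambda>_. 0, \<Prod>b\<in>B. h b ^ c b) \<in> \<Gamma>" if "B \<subseteq> {..<N}" for B c
  proof -
    have "finite B" using that finite_subset by blast
    thus ?thesis using that
    proof (induction B rule: finite_induct)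
      case empty
      show ?case using one_closed by (simp flip: one_fun_def)
    next
      case (insert b B)
      have "(\<lambda>_. 0, h b ^ c b * (\<Prod>b\<in>B. h b ^ c b)) \<in> \<Gamma>"
        using insert assms(1) by (intro mult pow) auto
      thus ?case by (simp only: prod.insert[OF insert.hyps])
    qed
  qed
  thus ?thesis using assms(2) unfolding power_span_def by auto
qed

lemma card_bound_of_torsion_family:
  assumes S2: "finite S2" "\<And>x i. x \<in> p_torsion \<Longrightarrow> i \<notin> S2 \<Longrightarrow> snd x i = 1"
    and h: "\<And>b. b < N \<Longrightarrow> (\<lambda>_. 0, h b) \<in> \<Gamma>"
    and rel: "\<And>c. (\<Prod>b<N. h b ^ c b) = 1 \<Longrightarrow> \<forall>b<N. p dvd c b"
  shows "N \<le> card S2"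
proof -
  have "\<exists>Q>0. \<forall>g\<in>h ` {..<N}. g ^ Q = 1"
    using snd_mixed_sum_group_power_eq_1[OF p_pos in_carrier[OF h]] by (intro common_exponent) auto
  then obtain Q where Q: "0 < Q" "\<And>b. b < N \<Longrightarrow> h b ^ Q = 1" by blast
  have "p ^ N \<le> card {f \<in> power_span h N. f ^ p = 1}"
    by (rule card_power_kernel_of_power_span_ge[OF p_pos Q rel])
  also have "\<dots> \<le> card {f :: 'b \<Rightarrow> complex. (\<forall>i. f i ^ p = 1) \<and> (\<forall>i. i \<notin> S2 \<longrightarrow> f i = 1)}"
  proof (rule card_mono)
    show "finite {f :: 'b \<Rightarrow> complex. (\<forall>i. f i ^ p = 1) \<and> (\<forall>i. i \<notin> S2 \<longrightarrow> f i = 1)}"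
      by (rule card_supported_roots_of_unity(1)[OF S2(1) p_pos])
    show "{f \<in> power_span h N. f ^ p = 1} \<subseteq> {f. (\<forall>i. f i ^ p = 1) \<and> (\<forall>i. i \<notin> S2 \<longrightarrow> f i = 1)}"
    proof clarify
      fix f assume f: "f \<in> power_span h N" "f ^ p = 1"
      hence "\<forall>i. f i ^ p = 1" by (simp add: fun_eq_iff power_fun_apply)
      moreover have "(\<lambda>_. 0, f) \<in> p_torsion"
        using power_span_in_zero_rational_part[OF h f(1)] \<open>\<forall>i. f i ^ p = 1\<close>
          by (simp add: p_torsion_iff)
      ultimately show "(\<forall>i. f i ^ p = 1) \<and> (\<forall>i. i \<notin> S2 \<longrightarrow> f i = 1)"
        using S2(2)[of "(\<lambda>_. 0, f)"] by simp
    qed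
  qed
  also have "\<dots> \<le> p ^ card S2" by (rule card_supported_roots_of_unity(2)[OF S2(1) p_pos])
  finally show ?thesis by (rule power_le_imp_le_exp[OF prime_gt_1_nat[OF prime]])
qed

lemma block_products_relation:
  fixes N D :: nat and y :: "nat \<times> nat \<Rightarrow> ('a \<Rightarrow> rat) \<times> ('b \<Rightarrow> complex)"
    and M :: "nat \<Rightarrow> nat \<Rightarrow> int" and c :: "nat \<Rightarrow> nat"
  defines "J \<equiv> {..<N} \<times> {..<D}"
  assumes indep: "independent_mod H p E" and y: "inj_on y J" "y ` J \<subseteq> E"
    and M: "\<And>b. b < N \<Longrightarrow> \<exists>r<D. \<not> int p dvd M b r"
      "\<And>b i. b < N \<Longrightarrow> (\<Sum>r<D. of_int (M b r) * fst (y (b, r)) i) = 0"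
    and rel: "(\<Prod>b<N. (\<lambda>i. \<Prod>r<D. snd (y (b, r)) i powi M b r) ^ c b) = 1"
  shows "\<forall>b<N. p dvd c b"
proof (intro allI impI)
  fix b assume "b < N"
  define \<mu> where "\<mu> = (\<lambda>(b, r). int (c b) * M b r)"
  have "y ` J \<subseteq> \<Gamma>" using y(2) indep unfolding independent_mod_def by auto
  have "(\<Sum>j\<in>J. of_int (\<mu> j) * fst (y j) i) = 0" for i
  proof -
    have "(\<Sum>j\<in>J. of_int (\<mu> j) * fst (y j) i)
        = (\<Sum>b<N. of_nat (c b) * (\<Sum>r<D. of_int (M b r) * fst (y (b, r)) i))"
      unfolding J_def \<mu>_def by (simp add: sum.cartesian_product' sum_distrib_left mult.assoc)
    thus ?thesis using M(2) by simp
  qed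
  moreover have "(\<Prod>j\<in>J. snd (y j) i powi \<mu> j) = 1" for i
  proof -
    have "(\<Prod>j\<in>J. snd (y j) i powi \<mu> j) = (\<Prod>b<N. (\<Prod>r<D. snd (y (b, r)) i powi M b r) ^ c b)"
    proof -
      have "snd (y (b, r)) i powi (int (c b) * M b r) = (snd (y (b, r)) i powi M b r) ^ c b" for b r
        by (simp only: mult.commute[of "int (c b)"] power_int_mult power_int_of_nat)
      thus ?thesis unfolding J_def \<mu>_def by (simp add: prod.cartesian_product' prod_power)
    qed
    also have "\<dots> = 1" using fun_cong[OF rel, of i] by (simp add: prod_fun_apply power_fun_apply)
    finally show ?thesis .
  qed
  ultimately have "finprod H (\<lambda>j. y j [^]\<^bsub>H\<^esub> \<mu> j) J = \<one>\<^bsub>H\<^esub>"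
    using finprod_H_int_pow[of J y \<mu>] \<open>y ` J \<subseteq> \<Gamma>\<close> unfolding J_def by simp
  hence dvd: "int p dvd \<mu> j" if "j \<in> J" for j
    using comm_group.independent_mod_indexed[OF comm_group_H indep _ y] that unfolding J_def by simp
  obtain r where "r < D" "\<not> int p dvd M b r" using M(1)[OF \<open>b < N\<close>] by blast
  moreover have "int p dvd int (c b) * M b r" using dvd[of "(b, r)"] \<open>b < N\<close> \<open>r < D\<close>
    unfolding J_def \<mu>_def by simp
  ultimately show "p dvd c b" using prime by (simp add: prime_dvd_mult_iff)
qed

lemma rational_parts_relation_not_all_dvd:
  assumes S1: "finite S1" "\<And>x i. x \<in> \<Gamma> \<Longrightarrow> i \<notin> S1 \<Longrightarrow> fst x i = 0"
    and z: "\<And>r. r < Suc (card S1) \<Longrightarrow> z r \<in> \<Gamma>"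
  shows "\<exists>m. (\<exists>r<Suc (card S1). \<not> int p dvd m r) \<and>
    (\<forall>i. (\<Sum>r<Suc (card S1). of_int (m r) * fst (z r) i) = 0)"
proof -
  have "fst (z r) i = 0" if "r < Suc (card S1)" "i \<notin> S1" for r i
    using S1(2)[OF z[OF that(1)] that(2)] .
  then obtain m where m: "Gcd (m ` {..<Suc (card S1)}) = 1"
    "\<forall>i. (\<Sum>r<Suc (card S1). of_int (m r) * fst (z r) i) = 0"
    using exists_coprime_int_linear_relation[of S1 "{..<Suc (card S1)}" "\<lambda>r i. fst (z r) i"] S1(1)
    by auto
  have "\<exists>r<Suc (card S1). \<not> int p dvd m r"
  proof (rule ccontr)
    assume "\<not> (\<exists>r<Suc (card S1). \<not> int p dvd m r)"
    hence "int p dvd Gcd (m ` {..<Suc (card S1)})" by (auto intro: Gcd_greatest)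
    thus False using m(1) prime by (simp add: prime_gt_1_nat)
  qed
  thus ?thesis using m(2) by blast
qed

lemma torsion_family_of_independent_mod:
  fixes N :: nat
  assumes indep: "independent_mod H p E" "infinite E"
    and S1: "finite S1" "\<And>x i. x \<in> \<Gamma> \<Longrightarrow> i \<notin> S1 \<Longrightarrow> fst x i = 0"
  obtains h :: "nat \<Rightarrow> 'b \<Rightarrow> complex" where "\<And>b. b < N \<Longrightarrow> (\<lambda>_. 0, h b) \<in> \<Gamma>"
    and "\<And>c. (\<Prod>b<N. h b ^ c b) = 1 \<Longrightarrow> \<forall>b<N. p dvd c b"
proof -
  define D where "D = Suc (card S1)"
  define J where "J = {..<N} \<times> {..<D}"
  obtain Y where Y: "Y \<subseteq> E" "finite Y" "card Y = card J"
    using infinite_arbitrarily_large[OF indep(2)] by blast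
  then obtain y :: "nat \<times> nat \<Rightarrow> ('a \<Rightarrow> rat) \<times> ('b \<Rightarrow> complex)" where y: "bij_betw y J Y"
    using finite_same_card_bij[of J Y] unfolding J_def by auto
  have "E \<subseteq> \<Gamma>" using indep(1) unfolding independent_mod_def by simp
  hence y_\<Gamma>: "y (b, r) \<in> \<Gamma>" if "b < N" "r < D" for b r
    using bij_betw_apply[OF y] Y(1) that unfolding J_def by auto
  have "\<exists>m. (\<exists>r<D. \<not> int p dvd m r) \<and> (\<forall>i. (\<Sum>r<D. of_int (m r) * fst (y (b, r)) i) = 0)"
    if "b < N" for b
    using y_\<Gamma>[OF that] unfolding D_def by (intro rational_parts_relation_not_all_dvd[OF S1])
  then obtain M where M: "\<And>b. b < N \<Longrightarrow> \<exists>r<D. \<not> int p dvd M b r"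
    "\<And>b i. b < N \<Longrightarrow> (\<Sum>r<D. of_int (M b r) * fst (y (b, r)) i) = 0"
    by metis
  define h where "h b = (\<lambda>i. \<Prod>r<D. snd (y (b, r)) i powi M b r)" for b
  show thesis
  proof
    fix b assume "b < N"
    interpret comm_group H by (rule comm_group_H)
    have "finprod H (\<lambda>r. y (b, r) [^]\<^bsub>H\<^esub> M b r) {..<D} = (\<lambda>_. 0, h b)"
      using finprod_H_int_pow[of "{..<D}" "\<lambda>r. y (b, r)" "M b"] y_\<Gamma>[OF \<open>b < N\<close>] M(2)[OF \<open>b < N\<close>]
      unfolding h_def by auto
    moreover have "finprod H (\<lambda>r. y (b, r) [^]\<^bsub>H\<^esub> M b r) {..<D} \<in> carrier H"
      using y_\<Gamma>[OF \<open>b < N\<close>] by (intro finprod_closed) (auto intro: H_int_pow_closed)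
    ultimately show "(\<lambda>_. 0, h b) \<in> \<Gamma>" by simp
  next
    fix c assume "(\<Prod>b<N. h b ^ c b) = 1"
    thus "\<forall>b<N. p dvd c b" unfolding h_def
    proof (rule block_products_relation[OF indep(1), rotated -1])
      show "inj_on y ({..<N} \<times> {..<D})" using bij_betw_imp_inj_on[OF y] unfolding J_def .
      show "y ` ({..<N} \<times> {..<D}) \<subseteq> E" using bij_betw_imp_surj_on[OF y] Y(1) unfolding J_def by simp
    qed (use M in auto)
  qed
qed

lemma independent_mod_imp_supports_unbounded:
  assumes "independent_mod H p E" "infinite E"
  shows "rational_supports_unbounded \<or> torsion_supports_unbounded"
proof (rule ccontr)
  assume "\<not> (rational_supports_unbounded \<or> torsion_supports_unbounded)"
  then obtain S1 S2 where "finite S1" "\<forall>x\<in>\<Gamma>. {i. fst x i \<noteq> 0} \<subseteq> S1"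
    and "finite S2" "\<forall>x\<in>p_torsion. {i. snd x i \<noteq> 1} \<subseteq> S2"
    unfolding rational_supports_unbounded_def torsion_supports_unbounded_def by auto
  hence S1: "finite S1" "\<And>x i. x \<in> \<Gamma> \<Longrightarrow> i \<notin> S1 \<Longrightarrow> fst x i = 0"
    and S2: "finite S2" "\<And>x i. x \<in> p_torsion \<Longrightarrow> i \<notin> S2 \<Longrightarrow> snd x i = 1" by blast+
  obtain h where h: "\<And>b. b < Suc (card S2) \<Longrightarrow> (\<lambda>_. 0, h b) \<in> \<Gamma>"
    and rel: "\<And>c. (\<Prod>b<Suc (card S2). h b ^ c b) = 1 \<Longrightarrow> \<forall>b<Suc (card S2). p dvd c b"
    using torsion_family_of_independent_mod[OF assms S1] by blast
  have "Suc (card S2) \<le> card S2" by (rule card_bound_of_torsion_family[OF S2 h rel])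
  thus False by simp
qed

end

theorem proposition4p4:
  fixes p :: nat and B1 :: "'a set" and B2 :: "'b set"
    and \<Gamma> :: "(('a \<Rightarrow> rat) \<times> ('b \<Rightarrow> complex)) set"
  assumes "Factorial_Ring.prime p"
    and "subgroup \<Gamma> (mixed_sum_group p B1 B2)"
    and "countable \<Gamma>" and "infinite \<Gamma>"
  shows "(\<exists>E \<subseteq> \<Gamma>. infinite E \<and> NPR ((mixed_sum_group p B1 B2)\<lparr>carrier := \<Gamma>\<rparr>) p E)
     \<longleftrightarrow> (\<exists>E \<subseteq> \<Gamma>. infinite E \<and> independent_set ((mixed_sum_group p B1 B2)\<lparr>carrier := \<Gamma>\<rparr>) E)"
proof -
  interpret mixed_sum_subgroup p B1 B2 \<Gamma> by (rule mixed_sum_subgroup.intro) (fact assms)+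
  interpret H: comm_group H by (rule comm_group_H)
  show ?thesis
  proof
    assume "\<exists>E\<subseteq>\<Gamma>. infinite E \<and> NPR H p E"
    then obtain E where "infinite E" "NPR H p E" by blast
    hence "independent_mod H p E" "infinite E" using H.NPR_imp_independent_mod[OF p_pos] by auto
    thus "\<exists>E\<subseteq>\<Gamma>. infinite E \<and> independent_set H E"
      using NPR_independent_if_supports_unbounded independent_mod_imp_supports_unbounded by blast
  next
    assume "\<exists>E\<subseteq>\<Gamma>. infinite E \<and> independent_set H E"
    then obtain E where "E \<subseteq> \<Gamma>" "infinite E" "independent_set H E" by blast
    have "independent_mod H p (E - {\<one>\<^bsub>H\<^esub>})"
      by (rule H.independent_set_imp_independent_mod[OF \<open>independent_set H E\<close>])
        (use \<open>E \<subseteq> \<Gamma>\<close> pow_eq_one_imp_dvd in blast)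
    moreover have "infinite (E - {\<one>\<^bsub>H\<^esub>})" using \<open>infinite E\<close> by simp
    ultimately show "\<exists>E\<subseteq>\<Gamma>. infinite E \<and> NPR H p E"
      using NPR_independent_if_supports_unbounded independent_mod_imp_supports_unbounded by blast
  qed
qed

end
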